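(* $\mathfrak{d}(\beta\omega\setminus\omega,\le_{\mathrm{RK}})=2^{\mathfrak{c}}$.
   Context: $\beta\omega\setminus\omega$ is the set of nonprincipal ultrafilters on $\omega$. For ultrafilters $p,q$ on $\omega$, $p\le_{\mathrm{RK}} q$ (Rudin–Keisler) iff there is $f:\omega\to\omega$ with $p=\{A\subseteq\omega : f^{-1}(A)\in q\}$; this is a preorder, and the definitions below are applied to it verbatim. For a preorder $(P,\le)$, $F\subseteq P$ is dominating if for every $p\in P$ there is $q\in F$ with $p\le q$; $\mathfrak{d}(P,\le)$ is the minimal size of a dominating family. $\mathfrak{c}=2^{\aleph_0}$. *)

theory Defs
  imports Main
begin

definition ultrafilter_on_nat :: "nat set set \<Rightarrow> bool" where
  "ultrafilter_on_nat U \<longleftrightarrow>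
     UNIV \<in> U \<and> {} \<notin> U \<and>
     (\<forall>A B. A \<in> U \<and> A \<subseteq> B \<longrightarrow> B \<in> U) \<and>
     (\<forall>A B. A \<in> U \<and> B \<in> U \<longrightarrow> A \<inter> B \<in> U) \<and>
     (\<forall>A. A \<in> U \<or> - A \<in> U)"

definition nonprincipal :: "nat set set \<Rightarrow> bool" where
  "nonprincipal U \<longleftrightarrow> (\<forall>n. {n} \<notin> U)"

definition beta_omega_rem :: "nat set set set" where
  "beta_omega_rem = {U. ultrafilter_on_nat U \<and> nonprincipal U}"

definition RK_le :: "nat set set \<Rightarrow> nat set set \<Rightarrow> bool" where
  "RK_le p q \<longleftrightarrow> (\<exists>f :: nat \<Rightarrow> nat. p = {A. f -` A \<in> q})"

definition dominating :: "'a set \<Rightarrow> ('a \<Rightarrow> 'a \<Rightarrow> bool) \<Rightarrow> 'a set \<Rightarrow> bool" where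
  "dominating P le F \<longleftrightarrow> F \<subseteq> P \<and> (\<forall>p\<in>P. \<exists>q\<in>F. le p q)"

end

theory Submission
  imports Defs "HOL-Library.Countable"
begin

text \<open>
  The remainder \<open>\<beta>\<omega> \<setminus> \<omega>\<close> has at most \<open>2\<^sup>\<c>\<close> elements and dominates itself.  Conversely, there
  is an independent family of \<open>\<c>\<close> subsets of \<open>\<omega>\<close>; prescribing, for each member of the family,
  whether it or its complement belongs to the ultrafilter gives \<open>2\<^sup>\<c>\<close> pairwise distinct
  nonprincipal ultrafilters.  An ultrafilter lies RK-above at most \<open>\<c>\<close> ultrafilters, its
  images under the maps \<open>f : \<omega> \<rightarrow> \<omega>\<close>, so a dominating family \<open>F\<close> satisfies
  \<open>2\<^sup>\<c> \<le> |F| \<cdot> \<c>\<close>, whence \<open>|F| \<ge> 2\<^sup>\<c>\<close>.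
\<close>

unbundle cardinal_syntax

subsection \<open>Ultrafilters from the finite intersection property\<close>

definition fip :: "'a set set \<Rightarrow> bool" where
  "fip M \<longleftrightarrow> (\<forall>F. finite F \<and> F \<subseteq> M \<longrightarrow> \<Inter>F \<noteq> {})"

lemma fip_insert_iff: "fip (insert X M) \<longleftrightarrow> (\<forall>F. finite F \<and> F \<subseteq> M \<longrightarrow> X \<inter> \<Inter>F \<noteq> {})"
proof
  assume fip: "fip (insert X M)"
  show "\<forall>F. finite F \<and> F \<subseteq> M \<longrightarrow> X \<inter> \<Inter>F \<noteq> {}"
  proof (intro allI impI)
    fix F assume "finite F \<and> F \<subseteq> M"
    then have "\<Inter>(insert X F) \<noteq> {}"
      using fip unfolding fip_def by blast
    then show "X \<inter> \<Inter>F \<noteq> {}"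
      by simp
  qed
next
  assume *: "\<forall>F. finite F \<and> F \<subseteq> M \<longrightarrow> X \<inter> \<Inter>F \<noteq> {}"
  show "fip (insert X M)"
    unfolding fip_def
  proof (intro allI impI)
    fix F assume "finite F \<and> F \<subseteq> insert X M"
    then have "X \<inter> \<Inter>(F - {X}) \<noteq> {}"
      using * by blast
    moreover have "X \<inter> \<Inter>(F - {X}) \<subseteq> \<Inter>F"
      by blast
    ultimately show "\<Inter>F \<noteq> {}"
      by blast
  qed
qed

lemma ultrafilter_on_nat_if_maximal_fip:
  assumes fip: "fip M" and maximal: "\<And>X. fip (insert X M) \<Longrightarrow> X \<in> M"
  shows "ultrafilter_on_nat M"
proof -
  have maximalI: "X \<in> M" if "\<And>F. finite F \<Longrightarrow> F \<subseteq> M \<Longrightarrow> X \<inter> \<Inter>F \<noteq> {}" for X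
    using that by (intro maximal) (simp add: fip_insert_iff)
  have fipD: "\<Inter>F \<noteq> {}" if "finite F" "F \<subseteq> M" for F
    using fip that unfolding fip_def by blast
  show ?thesis
    unfolding ultrafilter_on_nat_def
  proof (intro conjI allI impI)
    show "UNIV \<in> M"
      using fipD by (intro maximalI) simp
    show "{} \<notin> M"
      using fipD[of "{{}}"] by auto
  next
    fix A B assume AB: "A \<in> M \<and> A \<subseteq> B"
    show "B \<in> M"
    proof (rule maximalI)
      fix F assume "finite F" "F \<subseteq> M"
      then have "\<Inter>(insert A F) \<noteq> {}"
        using AB by (intro fipD) auto
      then show "B \<inter> \<Inter>F \<noteq> {}"
        using AB by auto
    qed
  next
    fix A B assume AB: "A \<in> M \<and> B \<in> M"
    show "A \<inter> B \<in> M"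
    proof (rule maximalI)
      fix F assume "finite F" "F \<subseteq> M"
      then have "\<Inter>(insert A (insert B F)) \<noteq> {}"
        using AB by (intro fipD) auto
      then show "A \<inter> B \<inter> \<Inter>F \<noteq> {}"
        by (simp add: Int_assoc)
    qed
  next
    fix A
    show "A \<in> M \<or> - A \<in> M"
    proof (rule ccontr)
      assume "\<not> (A \<in> M \<or> - A \<in> M)"
      then have "\<not> fip (insert A M)" and "\<not> fip (insert (- A) M)"
        using maximal by blast+
      then obtain F1 F2 where F: "finite F1" "F1 \<subseteq> M" "A \<inter> \<Inter>F1 = {}"
        "finite F2" "F2 \<subseteq> M" "- A \<inter> \<Inter>F2 = {}"
        unfolding fip_insert_iff by blast
      then have "\<Inter>(F1 \<union> F2) = {}"
        by blast
      then show False
        using fipD[of "F1 \<union> F2"] F by blast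
    qed
  qed
qed

lemma fip_extends_to_ultrafilter_on_nat:
  assumes "fip B"
  obtains U where "ultrafilter_on_nat U" and "B \<subseteq> U"
proof -
  define \<A> where "\<A> = {M. B \<subseteq> M \<and> fip M}"
  have "\<exists>M\<in>\<A>. \<forall>X\<in>\<A>. M \<subseteq> X \<longrightarrow> X = M"
  proof (rule subset_Zorn_nonempty)
    show "\<A> \<noteq> {}"
      using assms unfolding \<A>_def by blast
  next
    fix \<C> assume "\<C> \<noteq> {}" and chain: "subset.chain \<A> \<C>"
    then have \<C>: "\<C> \<subseteq> \<A>"
      by (simp add: subset.chain_def)
    have "fip (\<Union>\<C>)"
      unfolding fip_def
    proof (intro allI impI)
      fix F assume F: "finite F \<and> F \<subseteq> \<Union>\<C>"
      then obtain M where "M \<in> \<C>" and "F \<subseteq> M"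
        using finite_subset_Union_chain[OF _ _ \<open>\<C> \<noteq> {}\<close> chain] by blast
      moreover have "fip M"
        using \<open>M \<in> \<C>\<close> \<C> unfolding \<A>_def by blast
      ultimately show "\<Inter>F \<noteq> {}"
        using F unfolding fip_def by blast
    qed
    moreover have "B \<subseteq> \<Union>\<C>"
      using \<open>\<C> \<noteq> {}\<close> \<C> unfolding \<A>_def by blast
    ultimately show "\<Union>\<C> \<in> \<A>"
      unfolding \<A>_def by blast
  qed
  then obtain M where "M \<in> \<A>" and max: "\<And>X. X \<in> \<A> \<Longrightarrow> M \<subseteq> X \<Longrightarrow> X = M"
    by blast
  then have M: "B \<subseteq> M" "fip M"
    unfolding \<A>_def by simp_all
  have "ultrafilter_on_nat M"
  proof (rule ultrafilter_on_nat_if_maximal_fip)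
    show "fip M"
      by (fact M(2))
    show "X \<in> M" if "fip (insert X M)" for X
    proof -
      have "insert X M \<in> \<A>"
        using M(1) that unfolding \<A>_def by blast
      then show ?thesis
        using max by blast
    qed
  qed
  then show thesis
    using that M(1) by blast
qed

lemma ultrafilter_on_nat_not_both:
  assumes "ultrafilter_on_nat U" and "X \<in> U" and "- X \<in> U"
  shows False
proof -
  have "X \<inter> - X \<in> U"
    using assms unfolding ultrafilter_on_nat_def by blast
  then show False
    using assms(1) unfolding ultrafilter_on_nat_def by simp
qed

subsection \<open>Independent families\<close>

definition independent_family :: "('i \<Rightarrow> nat set) \<Rightarrow> bool" where
  "independent_family Y \<longleftrightarrow> (\<forall>P N. finite P \<longrightarrow> finite N \<longrightarrow> P \<inter> N = {} \<longrightarrow>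
      infinite ((\<Inter>A\<in>P. Y A) \<inter> (\<Inter>B\<in>N. - Y B)))"

lemma fip_independent_family_base:
  assumes "independent_family Y"
  shows "fip (Y ` C \<union> (\<lambda>B. - Y B) ` (- C) \<union> {X. finite (- X)})"
  unfolding fip_def
proof (intro allI impI)
  fix F assume F: "finite F \<and> F \<subseteq> Y ` C \<union> (\<lambda>B. - Y B) ` (- C) \<union> {X. finite (- X)}"
  obtain P where P: "P \<subseteq> C" "finite P" "F \<inter> Y ` C = Y ` P"
    by (meson F Int_lower2 finite_Int finite_subset_image)
  obtain N where N: "N \<subseteq> - C" "finite N" "F \<inter> (\<lambda>B. - Y B) ` (- C) = (\<lambda>B. - Y B) ` N"
    by (meson F Int_lower2 finite_Int finite_subset_image)
  define I where "I = (\<Inter>A\<in>P. Y A) \<inter> (\<Inter>B\<in>N. - Y B)"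
  define G where "G = F \<inter> {X. finite (- X)}"
  have "P \<inter> N = {}"
    using P(1) N(1) by blast
  then have "infinite I"
    using assms P(2) N(2) unfolding independent_family_def I_def by blast
  moreover have "finite (- \<Inter>G)"
  proof -
    have "- \<Inter>G = \<Union>(uminus ` G)"
      by auto
    then show ?thesis
      using F by (simp add: G_def)
  qed
  ultimately have "I \<inter> \<Inter>G \<noteq> {}"
    using finite_subset[of I "- \<Inter>G"] by blast
  moreover have "I \<inter> \<Inter>G \<subseteq> X" if X: "X \<in> F" for X
  proof -
    have "X \<in> Y ` C \<or> X \<in> (\<lambda>B. - Y B) ` (- C) \<or> finite (- X)"
      using F X by blast
    then consider "X \<in> Y ` P" | "X \<in> (\<lambda>B. - Y B) ` N" | "X \<in> G"
      using X unfolding P(3)[symmetric] N(3)[symmetric] G_def by blast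
    then show ?thesis
      unfolding I_def G_def by cases auto
  qed
  ultimately show "\<Inter>F \<noteq> {}"
    by blast
qed

lemma nonprincipal_ultrafilter_prescribed_by_independent_family:
  assumes "independent_family Y"
  obtains U where "U \<in> beta_omega_rem" "Y ` C \<subseteq> U" "(\<lambda>B. - Y B) ` (- C) \<subseteq> U"
proof -
  obtain U where U: "ultrafilter_on_nat U"
    and base: "Y ` C \<union> (\<lambda>B. - Y B) ` (- C) \<union> {X. finite (- X)} \<subseteq> U"
    using fip_extends_to_ultrafilter_on_nat[OF fip_independent_family_base[OF assms]] .
  have "{n} \<notin> U" for n
  proof
    assume "{n} \<in> U"
    moreover have "- {n} \<in> U"
      using base by auto
    ultimately show False
      using ultrafilter_on_nat_not_both[OF U] by blast
  qed
  then have "U \<in> beta_omega_rem"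
    using U unfolding beta_omega_rem_def nonprincipal_def by blast
  then show thesis
    using that base by blast
qed

theorem card_of_Pow_ordLeq_beta_omega_rem:
  fixes Y :: "'i \<Rightarrow> nat set"
  assumes "independent_family Y"
  shows "|Pow (UNIV :: 'i set)| \<le>o |beta_omega_rem|"
proof -
  have "\<forall>C. \<exists>U. U \<in> beta_omega_rem \<and> Y ` C \<subseteq> U \<and> (\<lambda>B. - Y B) ` (- C) \<subseteq> U"
  proof
    fix C
    obtain U where "U \<in> beta_omega_rem" "Y ` C \<subseteq> U" "(\<lambda>B. - Y B) ` (- C) \<subseteq> U"
      by (rule nonprincipal_ultrafilter_prescribed_by_independent_family[OF assms])
    then show "\<exists>U. U \<in> beta_omega_rem \<and> Y ` C \<subseteq> U \<and> (\<lambda>B. - Y B) ` (- C) \<subseteq> U"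
      by blast
  qed
  from choice[OF this] obtain U
    where "\<forall>C. U C \<in> beta_omega_rem \<and> Y ` C \<subseteq> U C \<and> (\<lambda>B. - Y B) ` (- C) \<subseteq> U C"
    by blast
  then have U_mem: "\<And>C. U C \<in> beta_omega_rem"
    and U_pos: "\<And>C. Y ` C \<subseteq> U C" and U_neg: "\<And>C. (\<lambda>B. - Y B) ` (- C) \<subseteq> U C"
    by simp_all
  have separate: "U C \<noteq> U C'" if "A \<in> C" "A \<notin> C'" for A C C'
  proof
    assume "U C = U C'"
    then have "Y A \<in> U C" "- Y A \<in> U C"
      using U_pos[of C] U_neg[of C'] that by auto
    moreover have "ultrafilter_on_nat (U C)"
      using U_mem unfolding beta_omega_rem_def by blast
    ultimately show False
      using ultrafilter_on_nat_not_both by blast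
  qed
  have "inj U"
  proof (rule injI, rule ccontr)
    fix C C' assume "U C = U C'" and "C \<noteq> C'"
    then show False
      using separate[of _ C C'] separate[of _ C' C] by blast
  qed
  then show ?thesis
    by (rule card_of_ordLeqI[OF inj_on_subset[OF _ subset_UNIV]]) (simp add: U_mem)
qed

text \<open>
  A code \<open>(s, S)\<close> lists a finite set \<open>s\<close> and a family \<open>S\<close> of subsets of \<open>s\<close>; the member of
  the family indexed by \<open>A \<subseteq> \<omega>\<close> consists of the (numbers of the) codes with \<open>A \<inter> s \<in> S\<close>.
\<close>

definition code_accepts :: "nat list \<times> nat list list \<Rightarrow> nat set \<Rightarrow> bool" where
  "code_accepts c A \<longleftrightarrow> (\<exists>ys\<in>set (snd c). set ys = set (fst c) \<inter> A)"

definition independent_sets :: "nat set \<Rightarrow> nat set" where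
  "independent_sets A = {n. code_accepts (from_nat n) A}"

lemma finite_separating_set:
  assumes "finite S"
  obtains s :: "'a set" where "finite s" "\<And>A B. A \<in> S \<Longrightarrow> B \<in> S \<Longrightarrow> A \<inter> s = B \<inter> s \<Longrightarrow> A = B"
proof -
  define d where "d = (\<lambda>(A, B :: 'a set). SOME x. x \<in> A - B \<union> (B - A))"
  have d: "d (A, B) \<in> A - B \<union> (B - A)" if "A \<noteq> B" for A B
  proof -
    have "\<exists>x. x \<in> A - B \<union> (B - A)"
      using that by blast
    then show ?thesis
      unfolding d_def case_prod_conv by (rule someI_ex)
  qed
  show thesis
  proof
    show "finite (d ` (S \<times> S))"
      using assms by simp
    show "A = B" if "A \<in> S" "B \<in> S" "A \<inter> d ` (S \<times> S) = B \<inter> d ` (S \<times> S)" for A B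
    proof (rule ccontr)
      assume "A \<noteq> B"
      then have "d (A, B) \<in> d ` (S \<times> S)"
        using that(1,2) by blast
      then show False
        using d[OF \<open>A \<noteq> B\<close>] that(3) by blast
    qed
  qed
qed

lemma independent_family_independent_sets: "independent_family independent_sets"
  unfolding independent_family_def
proof (intro allI impI)
  fix P N :: "nat set set"
  assume "finite P" "finite N" "P \<inter> N = {}"
  have "finite (P \<union> N)"
    using \<open>finite P\<close> \<open>finite N\<close> by simp
  then obtain s where s: "finite s" "\<And>A B. A \<in> P \<union> N \<Longrightarrow> B \<in> P \<union> N \<Longrightarrow> A \<inter> s = B \<inter> s \<Longrightarrow> A = B"
    by (rule finite_separating_set) blast
  obtain L where L: "set L = P"
    using \<open>finite P\<close> finite_list by blast
  \<comment> \<open>For \<open>k \<notin> s\<close>, the code of \<open>(s \<union> {k}, {(s \<union> {k}) \<inter> A | A \<in> P})\<close> accepts every member of \<open>P\<close>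
    and, as \<open>s\<close> separates \<open>P \<union> N\<close>, no member of \<open>N\<close>.\<close>
  define code where "code k = (sorted_list_of_set (insert k s),
      map (\<lambda>A. sorted_list_of_set (insert k s \<inter> A)) L)" for k
  have fst_code: "set (fst (code k)) = insert k s" for k
    unfolding code_def fst_conv using s(1) by (intro set_sorted_list_of_set) simp
  have snd_code: "set ` set (snd (code k)) = (\<lambda>A. insert k s \<inter> A) ` P" for k
    unfolding code_def snd_conv set_map image_comp L[symmetric] using s(1)
    by (intro image_cong refl) simp
  have accepts_iff: "code_accepts (code k) B \<longleftrightarrow> (\<exists>A\<in>P. insert k s \<inter> A = insert k s \<inter> B)" for k B
  proof -
    have "code_accepts (code k) B \<longleftrightarrow> insert k s \<inter> B \<in> set ` set (snd (code k))"
      unfolding code_accepts_def fst_code by (auto simp: image_iff eq_commute)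
    also have "\<dots> \<longleftrightarrow> (\<exists>A\<in>P. insert k s \<inter> A = insert k s \<inter> B)"
      unfolding snd_code by (auto simp: image_iff eq_commute)
    finally show ?thesis .
  qed
  have mem: "to_nat (code k) \<in> (\<Inter>A\<in>P. independent_sets A) \<inter> (\<Inter>B\<in>N. - independent_sets B)" for k
  proof -
    have "code_accepts (code k) A" if "A \<in> P" for A
      using that unfolding accepts_iff by blast
    moreover have "\<not> code_accepts (code k) B" if "B \<in> N" for B
    proof
      assume "code_accepts (code k) B"
      then obtain A where "A \<in> P" "A \<inter> s = B \<inter> s"
        unfolding accepts_iff by blast
      then show False
        using s(2)[of A B] that \<open>P \<inter> N = {}\<close> by blast
    qed
    ultimately show ?thesis
      unfolding independent_sets_def by simp
  qed
  have "inj_on (\<lambda>k. to_nat (code k)) (- s)"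
  proof (rule inj_onI)
    fix k k' assume "k \<in> - s" "k' \<in> - s" "to_nat (code k) = to_nat (code k')"
    then have "insert k s = insert k' s"
      using fst_code[of k] fst_code[of k'] by simp
    then show "k = k'"
      using \<open>k \<in> - s\<close> \<open>k' \<in> - s\<close> by blast
  qed
  moreover have "infinite (- s)"
    using s(1) by (simp add: Compl_eq_Diff_UNIV)
  ultimately have "infinite ((\<lambda>k. to_nat (code k)) ` (- s))"
    using finite_imageD by blast
  moreover have "(\<lambda>k. to_nat (code k)) ` (- s) \<subseteq> (\<Inter>A\<in>P. independent_sets A) \<inter> (\<Inter>B\<in>N. - independent_sets B)"
    using mem by blast
  ultimately show "infinite ((\<Inter>A\<in>P. independent_sets A) \<inter> (\<Inter>B\<in>N. - independent_sets B))"
    using finite_subset by blast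
qed

subsection \<open>Cardinality of dominating families\<close>

lemma card_of_Pow_ordLeq_Times_factor:
  assumes "infinite B" and "|C| \<le>o |B|" and "|Pow B| \<le>o |A \<times> C|"
  shows "|Pow B| \<le>o |A|"
proof (cases "|B| \<le>o |A|")
  case True
  then have "infinite A"
    using assms(1) card_of_ordLeq_infinite by blast
  have "|A \<times> C| \<le>o |A \<times> A|"
    using card_of_Times_mono2 ordLeq_transitive[OF assms(2) True] .
  also have "|A \<times> A| =o |A|"
    using \<open>infinite A\<close> by (rule card_of_Times_same_infinite)
  finally show ?thesis
    by (rule ordLeq_transitive[OF assms(3)])
next
  case False
  then have "|A| \<le>o |B|"
    using ordLeq_total[OF card_of_Well_order card_of_Well_order] by blast
  have "|Pow B| \<le>o |A \<times> C|"
    by (fact assms(3))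
  also have "|A \<times> C| \<le>o |B \<times> C|"
    using \<open>|A| \<le>o |B|\<close> by (rule card_of_Times_mono1)
  also have "|B \<times> C| \<le>o |B \<times> B|"
    using assms(2) by (rule card_of_Times_mono2)
  also have "|B \<times> B| =o |B|"
    using assms(1) by (rule card_of_Times_same_infinite)
  finally have "|Pow B| \<le>o |B|" .
  then show ?thesis
    using card_of_Pow[of B] not_ordLess_ordLeq by blast
qed

lemma card_of_nat_funs_ordLeq_nat_sets: "|UNIV :: (nat \<Rightarrow> nat) set| \<le>o |UNIV :: nat set set|"
proof -
  have "inj (\<lambda>f :: nat \<Rightarrow> nat. range (\<lambda>n. to_nat (n, f n)))"
  proof (rule injI)
    fix f g :: "nat \<Rightarrow> nat"
    assume graph: "range (\<lambda>n. to_nat (n, f n)) = range (\<lambda>n. to_nat (n, g n))"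
    show "f = g"
    proof
      fix n
      obtain m where "to_nat (n, f n) = to_nat (m, g m)"
        using graph by (metis (mono_tags, lifting) rangeE rangeI)
      then show "f n = g n"
        by auto
    qed
  qed
  then show ?thesis
    by (rule card_of_ordLeqI) simp
qed

lemma card_of_ordLeq_Times_if_RK_dominating:
  assumes "dominating P RK_le F"
  shows "|P| \<le>o |F \<times> (UNIV :: (nat \<Rightarrow> nat) set)|"
proof (rule surj_imp_ordLeq)
  show "P \<subseteq> (\<lambda>(q, f). {A. f -` A \<in> q}) ` (F \<times> UNIV)"
    using assms unfolding dominating_def RK_le_def by fast
qed

theorem mainTheorem18:
  shows "(\<exists>F. dominating beta_omega_rem RK_le F \<and>
            (card_of F, card_of (Pow (UNIV :: nat set set))) \<in> ordIso)
       \<and> (\<forall>F. dominating beta_omega_rem RK_le F \<longrightarrow>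
            (card_of (Pow (UNIV :: nat set set)), card_of F) \<in> ordLeq)"
proof -
  have lower: "|Pow (UNIV :: nat set set)| \<le>o |beta_omega_rem|"
    using card_of_Pow_ordLeq_beta_omega_rem independent_family_independent_sets by blast
  have "dominating beta_omega_rem RK_le beta_omega_rem"
    unfolding dominating_def RK_le_def by (auto intro!: exI[of _ id])
  moreover have "|beta_omega_rem| =o |Pow (UNIV :: nat set set)|"
    using lower card_of_mono1[of beta_omega_rem "Pow UNIV"] ordIso_iff_ordLeq by blast
  moreover have "|Pow (UNIV :: nat set set)| \<le>o |F|" if "dominating beta_omega_rem RK_le F" for F
  proof (rule card_of_Pow_ordLeq_Times_factor)
    show "infinite (UNIV :: nat set set)"
      using infinite_UNIV_nat finite_Pow_iff[of "UNIV :: nat set"] by simp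
    show "|UNIV :: (nat \<Rightarrow> nat) set| \<le>o |UNIV :: nat set set|"
      by (fact card_of_nat_funs_ordLeq_nat_sets)
    show "|Pow (UNIV :: nat set set)| \<le>o |F \<times> (UNIV :: (nat \<Rightarrow> nat) set)|"
      using lower card_of_ordLeq_Times_if_RK_dominating[OF that] by (rule ordLeq_transitive)
  qed
  ultimately show ?thesis
    by blast
qed

end
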